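(* On $T^*\mathrm{Eng}(n)$, for all $i,j\in\{1,\dots,n\}$ with $i\neq j$ and all $N\in\{1,\dots,n\}$, the functions $L_{ij}$ and $C_N$ are prime integrals of the normal Hamiltonian flow, i.e. $\{L_{ij},H\}=0$ and $\{C_N,H\}=0$.
   Context: $\mathrm{Eng}(n)$ is the simply connected Lie group with Lie algebra basis $X_1,\dots,X_n,Y_0,\dots,Y_{n+1}$ whose only nontrivial brackets (up to antisymmetry) are $[X_i,Y_0]=Y_i$ and $[X_i,Y_i]=Y_{n+1}$, $i=1,\dots,n$; all are viewed as left-invariant vector fields. For a vector field $X$, $P_X\in C^\infty(T^*\mathrm{Eng}(n))$ is $P_X(\lambda)=\langle\lambda,X\rangle$. The normal Hamiltonian is $H=\frac12\big(\sum_{i=1}^nP_{X_i}^2+P_{Y_0}^2\big)$ (the paper's statement is insensitive to the constant factor). Poisson brackets on $T^*\mathrm{Eng}(n)$ (canonical symplectic form) are normalized so that $\{P_X,P_Y\}=P_{[X,Y]}$ for left-invariant $X,Y$. Define $L_{ij}:=P_{X_i}P_{Y_j}-P_{X_j}P_{Y_i}$ and $C_N:=\frac12\sum_{i,j\in\{1,\dots,N\},\,i\neq j}L_{ij}^2$. *)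

theory Defs
  imports "HOL-Analysis.Analysis"
begin

text \<open>A point of the dual (momentum coordinates of a covector lambda in the
  left trivialisation T*Eng(n) = Eng(n) x eng(n)*) is a function
  p :: idx => real with p a = P_a(lambda).\<close>

datatype idx = X nat | Y nat

definition basis :: "nat \<Rightarrow> idx set" where
  "basis n = X ` {1..n} \<union> Y ` {0..n+1}"

text \<open>P_{[a,b]} for basis vectors a, b: the only nontrivial brackets are
  [X i, Y 0] = Y i and [X i, Y i] = Y (n+1), i = 1..n (plus antisymmetry).\<close>

fun lieP :: "nat \<Rightarrow> idx \<Rightarrow> idx \<Rightarrow> (idx \<Rightarrow> real) \<Rightarrow> real" where
  "lieP n (X i) (Y j) p =
     (if 1 \<le> i \<and> i \<le> n \<and> j = 0 then p (Y i)
      else if 1 \<le> i \<and> i \<le> n \<and> j = i then p (Y (n+1)) else 0)"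
| "lieP n (Y j) (X i) p =
     (if 1 \<le> i \<and> i \<le> n \<and> j = 0 then - p (Y i)
      else if 1 \<le> i \<and> i \<le> n \<and> j = i then - p (Y (n+1)) else 0)"
| "lieP n _ _ p = 0"

definition pd :: "((idx \<Rightarrow> real) \<Rightarrow> real) \<Rightarrow> idx \<Rightarrow> (idx \<Rightarrow> real) \<Rightarrow> real" where
  "pd F a p = deriv (\<lambda>t. F (p(a := t))) (p a)"

text \<open>Poisson bracket (canonical symplectic form on T*Eng(n)) of two functions
  depending only on the left-invariant momenta P_a, normalised so that
  {P_a, P_b} = P_{[a,b]}; by the Leibniz rule
  {F,G} = sum_{a,b} dF/dP_a dG/dP_b P_{[a,b]}.\<close>

definition poisson :: "nat \<Rightarrow> ((idx \<Rightarrow> real) \<Rightarrow> real) \<Rightarrow> ((idx \<Rightarrow> real) \<Rightarrow> real)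
    \<Rightarrow> (idx \<Rightarrow> real) \<Rightarrow> real" where
  "poisson n F G p = (\<Sum>a\<in>basis n. \<Sum>b\<in>basis n. pd F a p * pd G b p * lieP n a b p)"

definition Ham :: "nat \<Rightarrow> (idx \<Rightarrow> real) \<Rightarrow> real" where
  "Ham n p = (1/2) * ((\<Sum>i=1..n. (p (X i))^2) + (p (Y 0))^2)"

definition Lij :: "nat \<Rightarrow> nat \<Rightarrow> (idx \<Rightarrow> real) \<Rightarrow> real" where
  "Lij i j p = p (X i) * p (Y j) - p (X j) * p (Y i)"

definition CN :: "nat \<Rightarrow> (idx \<Rightarrow> real) \<Rightarrow> real" where
  "CN N p = (1/2) * (\<Sum>i\<in>{1..N}. \<Sum>j\<in>{1..N} - {i}. (Lij i j p)^2)"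

end

theory Submission
  imports Defs
begin

(* Expanding the bracket in the first argument, {F, H} = sum_a dF/dP_a {P_a, H}, and along
   the normal flow {P_(X k), H} = P_(Y 0) P_(Y k) and {P_(Y k), H} = - P_(X k) P_(Y (n+1)).
   Hence in {L_ij, H} = P_(Y j){P_(X i), H} + P_(X i){P_(Y j), H} - P_(Y i){P_(X j), H}
   - P_(X j){P_(Y i), H} the four terms cancel in pairs. Since C_N depends on the momenta only
   through the L_ij, {C_N, H} = sum L_ij {L_ij, H} = 0. *)

lemma fun_upd_has_real_derivative:
  "((\<lambda>t. (p(a := t)) b) has_real_derivative (if b = a then 1 else 0)) (at x)"
  by (cases "b = a") auto

lemma pd_eqI:
  assumes "((\<lambda>t. F (p(a := t))) has_real_derivative D) (at (p a))"
  shows "pd F a p = D"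
  using assms unfolding pd_def by (rule DERIV_imp_deriv)

lemma pd_coord: "pd (\<lambda>q. q a) b p = (if a = b then 1 else 0)"
  by (rule pd_eqI) (use fun_upd_has_real_derivative in auto)

lemma finite_basis [simp]: "finite (basis n)"
  by (simp add: basis_def)

lemma sum_basis_delta:
  assumes "b \<in> basis n"
  shows "(\<Sum>a\<in>basis n. (if a = b then c else 0) * f a) = c * (f b :: real)"
proof -
  have "(\<Sum>a\<in>basis n. (if a = b then c else 0) * f a)
      = (\<Sum>a\<in>basis n. if a = b then c * f b else 0)"
    by (rule sum.cong) auto
  then show ?thesis
    using assms by simp
qed

lemma poisson_coord:
  assumes "a \<in> basis n"
  shows "poisson n (\<lambda>q. q a) G p = (\<Sum>b\<in>basis n. pd G b p * lieP n a b p)"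
proof -
  have "poisson n (\<lambda>q. q a) G p
      = (\<Sum>c\<in>basis n. if a = c then \<Sum>b\<in>basis n. pd G b p * lieP n c b p else 0)"
    unfolding poisson_def pd_coord by (rule sum.cong) auto
  then show ?thesis
    using assms by simp
qed

lemma poisson_eq_sum_pd_poisson_coord:
  "poisson n F G p = (\<Sum>a\<in>basis n. pd F a p * poisson n (\<lambda>q. q a) G p)"
  unfolding poisson_def[of n F G]
  by (simp add: poisson_coord sum_distrib_left mult.assoc cong: sum.cong)

lemma poisson_linear_in_gradient:
  assumes "finite K" and "\<And>a. a \<in> basis n \<Longrightarrow> pd F a p = (\<Sum>k\<in>K. c k * pd (G k) a p)"
  shows "poisson n F H p = (\<Sum>k\<in>K. c k * poisson n (G k) H p)"
  unfolding poisson_def using assms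
  by (simp add: sum_distrib_left sum_distrib_right mult.assoc sum.swap[of _ K])

lemma sum_squares_fun_upd_has_real_derivative:
  assumes "finite B"
  shows "((\<lambda>t. \<Sum>b\<in>B. ((p(a := t)) b)\<^sup>2) has_real_derivative
           (if a \<in> B then 2 * p a else 0)) (at (p a))"
proof -
  have "((\<lambda>t. \<Sum>b\<in>B. ((p(a := t)) b)\<^sup>2) has_real_derivative
          (\<Sum>b\<in>B. if b = a then 2 * p a else 0)) (at (p a))"
    by (rule derivative_eq_intros fun_upd_has_real_derivative refl)+ (auto intro!: sum.cong)
  then show ?thesis
    using assms by simp
qed

definition horizontal :: "nat \<Rightarrow> idx set" where
  "horizontal n = insert (Y 0) (X ` {1..n})"

lemma Ham_eq_sum_horizontal: "Ham n q = (1/2) * (\<Sum>b\<in>horizontal n. (q b)\<^sup>2)"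
  by (simp add: Ham_def horizontal_def sum.reindex inj_on_def image_iff add.commute)

lemma pd_Ham: "pd (Ham n) a p = (if a \<in> horizontal n then p a else 0)"
proof (rule pd_eqI)
  have "finite (horizontal n)"
    by (simp add: horizontal_def)
  from DERIV_cmult[OF sum_squares_fun_upd_has_real_derivative[OF this, of p a], of "1/2"]
  show "((\<lambda>t. Ham n (p(a := t))) has_real_derivative (if a \<in> horizontal n then p a else 0))
      (at (p a))"
    unfolding Ham_eq_sum_horizontal by (cases "a \<in> horizontal n") simp_all
qed

lemma poisson_coord_Ham:
  assumes "a \<in> basis n"
  shows "poisson n (\<lambda>q. q a) (Ham n) p = (\<Sum>b\<in>horizontal n. p b * lieP n a b p)"
proof -
  have "poisson n (\<lambda>q. q a) (Ham n) p
      = (\<Sum>b\<in>basis n. if b \<in> horizontal n then p b * lieP n a b p else 0)"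
    using assms by (auto simp: poisson_coord pd_Ham intro!: sum.cong)
  also have "\<dots> = (\<Sum>b\<in>{b \<in> basis n. b \<in> horizontal n}. p b * lieP n a b p)"
    by (simp add: sum.inter_filter)
  also have "{b \<in> basis n. b \<in> horizontal n} = horizontal n"
    by (auto simp: horizontal_def basis_def)
  finally show ?thesis .
qed

lemma poisson_X_Ham:
  assumes "k \<in> {1..n}"
  shows "poisson n (\<lambda>q. q (X k)) (Ham n) p = p (Y 0) * p (Y k)"
  using assms by (simp add: poisson_coord_Ham basis_def horizontal_def sum.reindex inj_on_def image_iff)

lemma poisson_Y_Ham:
  assumes "k \<in> {1..n}"
  shows "poisson n (\<lambda>q. q (Y k)) (Ham n) p = - p (X k) * p (Y (n + 1))"
proof -
  have "(\<Sum>m\<in>{1..n}. p (X m) * lieP n (Y k) (X m) p)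
      = (\<Sum>m\<in>{1..n}. if m = k then - p (X k) * p (Y (n + 1)) else 0)"
    using assms by (intro sum.cong) auto
  then show ?thesis
    using assms by (simp add: poisson_coord_Ham basis_def horizontal_def sum.reindex inj_on_def image_iff)
qed

lemma Lij_fun_upd_has_real_derivative:
  "((\<lambda>t. Lij i j (p(a := t))) has_real_derivative
      (if a = X i then p (Y j) else 0) + (if a = Y j then p (X i) else 0)
      - (if a = X j then p (Y i) else 0) - (if a = Y i then p (X j) else 0)) (at (p a))"
  unfolding Lij_def by (rule derivative_eq_intros fun_upd_has_real_derivative refl)+ auto

lemma pd_Lij:
  "pd (Lij i j) a p = (if a = X i then p (Y j) else 0) + (if a = Y j then p (X i) else 0)
     - (if a = X j then p (Y i) else 0) - (if a = Y i then p (X j) else 0)"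
  by (rule pd_eqI[OF Lij_fun_upd_has_real_derivative])

lemma poisson_Lij_Ham:
  assumes "i \<in> {1..n}" and "j \<in> {1..n}"
  shows "poisson n (Lij i j) (Ham n) p = 0"
proof -
  let ?P = "\<lambda>a. poisson n (\<lambda>q. q a) (Ham n) p"
  have in_basis: "X i \<in> basis n" "X j \<in> basis n" "Y i \<in> basis n" "Y j \<in> basis n"
    using assms by (auto simp: basis_def)
  have "poisson n (Lij i j) (Ham n) p = (\<Sum>a\<in>basis n. pd (Lij i j) a p * ?P a)"
    by (rule poisson_eq_sum_pd_poisson_coord)
  also have "\<dots> = p (Y j) * ?P (X i) + p (X i) * ?P (Y j) - p (Y i) * ?P (X j) - p (X j) * ?P (Y i)"
    by (simp only: pd_Lij ring_distribs sum.distrib sum_subtractf sum_basis_delta in_basis)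
  also have "\<dots> = 0"
    using assms by (simp add: poisson_X_Ham poisson_Y_Ham)
  finally show ?thesis .
qed

lemma pd_CN:
  "pd (CN N) a p = (\<Sum>i\<in>{1..N}. \<Sum>j\<in>{1..N} - {i}. Lij i j p * pd (Lij i j) a p)"
  unfolding CN_def
  by (rule pd_eqI, (rule derivative_eq_intros Lij_fun_upd_has_real_derivative[folded pd_Lij] refl)+)
    (simp add: sum_distrib_left mult_ac)

lemma poisson_CN_Ham:
  assumes "N \<le> n"
  shows "poisson n (CN N) (Ham n) p = 0"
proof -
  let ?pairs = "SIGMA i:{1..N}. {1..N} - {i}"
  have "poisson n (CN N) (Ham n) p
      = (\<Sum>k\<in>?pairs. Lij (fst k) (snd k) p * poisson n (Lij (fst k) (snd k)) (Ham n) p)"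
    by (rule poisson_linear_in_gradient) (auto simp: pd_CN sum.Sigma case_prod_unfold)
  also have "\<dots> = 0"
    using assms by (intro sum.neutral) (auto simp: poisson_Lij_Ham)
  finally show ?thesis .
qed

theorem lemma7:
  fixes n i j N :: nat
  assumes "i \<in> {1..n}" and "j \<in> {1..n}" and "i \<noteq> j" and "N \<in> {1..n}"
  shows "(\<forall>p. poisson n (Lij i j) (Ham n) p = 0) \<and> (\<forall>p. poisson n (CN N) (Ham n) p = 0)"
  using poisson_Lij_Ham[OF assms(1,2)] poisson_CN_Ham assms(4) by auto

end
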